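(* Let $\rho$ be a smooth function on an open interval $I\subset(0,\infty)$ or $I\subset(-\infty,0)$ with $\rho(t)\neq0$ for all $t\in I$, and let $\mu,\sigma$ be nonzero constants. Let $U(r,y),V(r,y)$ be smooth functions on $\mathbb{R}^2$ and define, for $(x,y,t)\in\mathbb{R}^2\times I$, $$u(x,y,t)=\Big(\frac{\rho(t)}{t}\Big)^{1/3}U\Big(\Big(\frac{\rho(t)}{t}\Big)^{1/3}x,\,y\Big),\qquad v(x,y,t)=\Big(\frac{\rho(t)}{t}\Big)^{2/3}V\Big(\Big(\frac{\rho(t)}{t}\Big)^{1/3}x,\,y\Big)-\frac{\rho'(t)}{9\mu}x,$$ with real cube roots. Then $(u,v)$ solves $$\rho(t)u_t+3\mu(uv)_x+\sigma u_{xxx}=0,\qquad u_x=v_y$$ if and only if $(U,V)$ solves $$-\tfrac13\big(U+rU_r\big)+3\mu(UV)_r+\sigma U_{rrr}=0,\qquad U_r-V_y=0.$$ *)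

theory Defs
  imports "HOL-Analysis.Analysis"
begin

text \<open>C-infinity functions of one real variable on an open set S:
  differentiable at every point of S with a derivative that is again C-infinity on S
  (hence all derivatives exist and are continuous on S).\<close>
coinductive smooth1_on :: "real set \<Rightarrow> (real \<Rightarrow> real) \<Rightarrow> bool" where
  "(\<And>t. t \<in> S \<Longrightarrow> (f has_real_derivative f' t) (at t)) \<Longrightarrow> smooth1_on S f'
    \<Longrightarrow> smooth1_on S f"

text \<open>C-infinity functions on the whole plane R^2 (written in curried form f x y):
  continuous, both first partial derivatives exist everywhere and are again
  C-infinity.  Thus all iterated partial derivatives exist and are continuous.\<close>
coinductive smooth2 :: "(real \<Rightarrow> real \<Rightarrow> real) \<Rightarrow> bool" where
  "continuous_on UNIV (\<lambda>p. f (fst p) (snd p))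
   \<Longrightarrow> (\<And>x y. ((\<lambda>s. f s y) has_real_derivative fx x y) (at x))
   \<Longrightarrow> (\<And>x y. ((\<lambda>s. f x s) has_real_derivative fy x y) (at y))
   \<Longrightarrow> smooth2 fx \<Longrightarrow> smooth2 fy \<Longrightarrow> smooth2 f"

end

theory Submission
  imports Defs
begin

text \<open>Put \<open>k(t) = (\<rho>(t)/t)\<^sup>1\<^sup>/\<^sup>3\<close>, so that \<open>k\<^sup>3 t = \<rho>\<close> and \<open>\<rho> k' = k (\<rho>' - \<rho>/t) / 3\<close>.
  Substituting the ansatz, each term of the first equation at \<open>(x, y, t)\<close> is \<open>k\<^sup>4\<close> times the
  corresponding term of the reduced equation at \<open>(r, y)\<close> with \<open>r = k x\<close>, except for the two
  multiples of \<open>U + r U\<^sub>r\<close>: \<open>\<rho> u\<^sub>t\<close> contributes \<open>\<rho> k'\<close> and the drift \<open>-\<rho>' x / (9\<mu>)\<close> of \<open>v\<close>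
  contributes \<open>-k \<rho>'/3\<close>, which add up to \<open>-k\<^sup>4/3\<close>. The constraint \<open>u\<^sub>x = v\<^sub>y\<close> scales by \<open>k\<^sup>2\<close>.
  As \<open>k(t) \<noteq> 0\<close>, \<open>x \<mapsto> k(t) x\<close> is onto, so the two systems are equivalent.\<close>

lemma smooth2_differentiable_fst:
  assumes "smooth2 f"
  shows "(\<lambda>s. f s y) differentiable at x"
  using assms by (cases rule: smooth2.cases) (auto simp: real_differentiable_def)

lemma smooth2_differentiable_snd:
  assumes "smooth2 f"
  shows "(\<lambda>s. f x s) differentiable at y"
  using assms by (cases rule: smooth2.cases) (unfold real_differentiable_def, blast)

lemma smooth2_deriv_fst:
  assumes "smooth2 f"
  shows "smooth2 (\<lambda>x y. deriv (\<lambda>s. f s y) x)"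
proof -
  from assms obtain fx where fx: "\<And>x y. ((\<lambda>s. f s y) has_real_derivative fx x y) (at x)"
    and "smooth2 fx"
    by (cases rule: smooth2.cases) blast
  moreover have "(\<lambda>x y. deriv (\<lambda>s. f s y) x) = fx"
    using fx by (intro ext DERIV_imp_deriv)
  ultimately show ?thesis by simp
qed

lemma smooth2_deriv_funpow_fst:
  assumes "smooth2 f"
  shows "smooth2 (\<lambda>x y. (deriv ^^ n) (\<lambda>s. f s y) x)"
proof (induction n)
  case 0
  then show ?case using assms by simp
next
  case (Suc n)
  then show ?case using smooth2_deriv_fst by fastforce
qed

lemma smooth2_deriv_funpow_differentiable_fst:
  assumes "smooth2 f"
  shows "(deriv ^^ n) (\<lambda>s. f s y) differentiable at x"
  using smooth2_differentiable_fst[OF smooth2_deriv_funpow_fst[OF assms]] by simp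

lemma smooth1_on_has_derivative:
  assumes "smooth1_on S f" "t \<in> S"
  shows "(f has_real_derivative deriv f t) (at t)"
  using assms by (cases rule: smooth1_on.cases) (metis DERIV_imp_deriv)

lemma has_real_derivative_odd_root:
  assumes "odd n" "(g has_real_derivative g') (at t)" "g t \<noteq> 0"
  shows "((\<lambda>s. root n (g s)) has_real_derivative root n (g t) * g' / (n * g t)) (at t)"
proof -
  define r where "r = root n (g t)"
  have g_eq: "g t = r ^ (n - 1) * r"
    unfolding r_def using assms(1) by (metis odd_pos odd_real_root_pow power_minus_mult)
  then have "r \<noteq> 0" "r ^ (n - 1) \<noteq> 0"
    using assms(3) by auto
  then have "inverse (real n * r ^ (n - Suc 0)) * g' = r * g' / (n * g t)"
    unfolding g_eq by (simp add: field_simps)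
  then show ?thesis
    using DERIV_chain2[OF DERIV_odd_real_root[OF assms(1,3)] assms(2)] by (simp add: r_def)
qed

lemma deriv_dilate:
  fixes f :: "real \<Rightarrow> real"
  assumes "\<And>z. f differentiable at z"
  shows "deriv (\<lambda>z. a * f (c * z)) = (\<lambda>z. a * c * deriv f (c * z))"
proof
  fix z
  have "((\<lambda>z. a * f (c * z)) has_real_derivative a * (deriv f (c * z) * c)) (at z)"
    using assms DERIV_deriv_iff_real_differentiable
    by (intro DERIV_cmult DERIV_chain2[where f = f]) (auto intro!: derivative_eq_intros)
  then show "deriv (\<lambda>z. a * f (c * z)) z = a * c * deriv f (c * z)"
    by (simp add: DERIV_imp_deriv mult_ac)
qed

lemma has_real_derivative_dilation_family:
  fixes f :: "real \<Rightarrow> real"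
  assumes k: "(k has_real_derivative k') (at t)" and f: "f differentiable at (k t * x)"
  shows "((\<lambda>s. k s * f (k s * x)) has_real_derivative
           k' * (f (k t * x) + k t * x * deriv f (k t * x))) (at t)"
proof -
  have "((\<lambda>s. f (k s * x)) has_real_derivative deriv f (k t * x) * (k' * x)) (at t)"
    using f DERIV_deriv_iff_real_differentiable
    by (intro DERIV_chain2[where f = f] DERIV_cmult_right[OF k]) auto
  from DERIV_mult[OF k this] show ?thesis
    by (simp add: algebra_simps)
qed

lemma deriv_dilated_product:
  fixes f g :: "real \<Rightarrow> real"
  assumes f: "f differentiable at (c * x)" and g: "g differentiable at (c * x)"
  shows "deriv (\<lambda>z. c * f (c * z) * (c\<^sup>2 * g (c * z) - b * z)) x
           = c ^ 4 * deriv (\<lambda>z. f z * g z) (c * x) - b * c * (f (c * x) + c * x * deriv f (c * x))"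
proof -
  have df: "(f has_real_derivative deriv f (c * x)) (at (c * x))"
    and dg: "(g has_real_derivative deriv g (c * x)) (at (c * x))"
    using f g DERIV_deriv_iff_real_differentiable by blast+
  have "deriv (\<lambda>z. f z * g z) (c * x) = deriv f (c * x) * g (c * x) + f (c * x) * deriv g (c * x)"
    using DERIV_imp_deriv[OF DERIV_mult[OF df dg]] by simp
  moreover have "((\<lambda>z. f (c * z)) has_real_derivative deriv f (c * x) * c) (at x)"
    and "((\<lambda>z. g (c * z)) has_real_derivative deriv g (c * x) * c) (at x)"
    by (rule DERIV_chain2[where g = "\<lambda>z. c * z", OF df] DERIV_chain2[where g = "\<lambda>z. c * z", OF dg];
        auto intro!: derivative_eq_intros)+
  then have "((\<lambda>z. c * f (c * z) * (c\<^sup>2 * g (c * z) - b * z)) has_real_derivative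
      c * (deriv f (c * x) * c) * (c\<^sup>2 * g (c * x) - b * x)
      + c * f (c * x) * (c\<^sup>2 * (deriv g (c * x) * c) - b)) (at x)"
    by (auto intro!: derivative_eq_intros)
  ultimately show ?thesis
    by (simp add: DERIV_imp_deriv algebra_simps power2_eq_square power4_eq_xxxx)
qed

lemma has_real_derivative_cbrt_quotient:
  assumes \<rho>: "(\<rho> has_real_derivative \<rho>') (at t)" and "t \<noteq> 0" "\<rho> t \<noteq> 0"
  shows "((\<lambda>s. root 3 (\<rho> s / s)) has_real_derivative
           root 3 (\<rho> t / t) * (\<rho>' - \<rho> t / t) / (3 * \<rho> t)) (at t)"
proof -
  have quotient: "((\<lambda>s. \<rho> s / s) has_real_derivative (\<rho>' * t - \<rho> t) / t\<^sup>2) (at t)"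
    using \<open>t \<noteq> 0\<close> by (auto intro!: derivative_eq_intros \<rho> simp: field_simps power2_eq_square)
  have "odd (3::nat)" "\<rho> t / t \<noteq> 0"
    using assms(2,3) by simp_all
  from has_real_derivative_odd_root[OF this(1) quotient this(2)] show ?thesis
    by (rule DERIV_cong) (use assms(2,3) in \<open>simp add: field_simps power2_eq_square\<close>)
qed

lemma kdv_similarity_residual:
  fixes f g k :: "real \<Rightarrow> real"
  assumes k: "(k has_real_derivative k') (at t)"
    and f: "\<And>n z. n < 3 \<Longrightarrow> (deriv ^^ n) f differentiable at z"
    and g: "\<And>z. g differentiable at z"
  shows "\<rho> * deriv (\<lambda>s. k s * f (k s * x)) t
           + 3 * \<mu> * deriv (\<lambda>z. k t * f (k t * z) * ((k t)\<^sup>2 * g (k t * z) - b * z)) x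
           + \<sigma> * deriv (deriv (deriv (\<lambda>z. k t * f (k t * z)))) x
         = (\<rho> * k' - 3 * \<mu> * b * k t) * (f (k t * x) + k t * x * deriv f (k t * x))
           + k t ^ 4 * (3 * \<mu> * deriv (\<lambda>z. f z * g z) (k t * x)
                        + \<sigma> * deriv (deriv (deriv f)) (k t * x))"
proof -
  have diff: "f differentiable at z" "deriv f differentiable at z" "deriv (deriv f) differentiable at z"
    for z
    using f[of 0] f[of 1] f[of 2] by (simp_all add: numeral_2_eq_2)
  note dilate = deriv_dilate[OF diff(1)] deriv_dilate[OF diff(2)] deriv_dilate[OF diff(3)]
  have d3: "deriv (deriv (deriv (\<lambda>z. k t * f (k t * z)))) x = k t ^ 4 * deriv (deriv (deriv f)) (k t * x)"
    by (simp add: dilate power4_eq_xxxx)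
  have dt: "deriv (\<lambda>s. k s * f (k s * x)) t = k' * (f (k t * x) + k t * x * deriv f (k t * x))"
    using has_real_derivative_dilation_family[OF k diff(1)] by (rule DERIV_imp_deriv)
  show ?thesis
    unfolding d3 dt deriv_dilated_product[where c = "k t" and x = x and b = b, OF diff(1) g]
    by (simp add: algebra_simps)
qed

lemma kdv_similarity_constraint:
  fixes f g :: "real \<Rightarrow> real"
  assumes "\<And>z. f differentiable at z" "g differentiable at y"
  shows "deriv (\<lambda>z. c * f (c * z)) x - deriv (\<lambda>w. c\<^sup>2 * g w - b * x) y
           = c\<^sup>2 * (deriv f (c * x) - deriv g y)"
proof -
  have "((\<lambda>w. c\<^sup>2 * g w - b * x) has_real_derivative c\<^sup>2 * deriv g y) (at y)"
    using assms(2) DERIV_deriv_iff_real_differentiable by (auto intro!: derivative_eq_intros)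
  then show ?thesis
    unfolding deriv_dilate[OF assms(1)] by (simp add: DERIV_imp_deriv power2_eq_square algebra_simps)
qed

lemma kdv_similarity_reduction_iff:
  fixes U V :: "real \<Rightarrow> real \<Rightarrow> real" and k :: "real \<Rightarrow> real"
  assumes U: "smooth2 U" and V: "smooth2 V"
    and k: "(k has_real_derivative k') (at t)" "k t \<noteq> 0"
    and coeff: "\<rho> * k' - 3 * \<mu> * b * k t = - (k t ^ 4 / 3)"
    and r: "r = k t * x"
  shows "(\<rho> * deriv (\<lambda>s. k s * U (k s * x) y) t
            + 3 * \<mu> * deriv (\<lambda>z. k t * U (k t * z) y * ((k t)\<^sup>2 * V (k t * z) y - b * z)) x
            + \<sigma> * deriv (deriv (deriv (\<lambda>z. k t * U (k t * z) y))) x = 0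
          \<and> deriv (\<lambda>z. k t * U (k t * z) y) x = deriv (\<lambda>w. (k t)\<^sup>2 * V (k t * x) w - b * x) y)
     \<longleftrightarrow> (- (1/3) * (U r y + r * deriv (\<lambda>z. U z y) r)
            + 3 * \<mu> * deriv (\<lambda>z. U z y * V z y) r
            + \<sigma> * deriv (deriv (deriv (\<lambda>z. U z y))) r = 0
          \<and> deriv (\<lambda>z. U z y) r - deriv (\<lambda>w. V r w) y = 0)"
proof -
  note residual = kdv_similarity_residual[where \<rho> = \<rho> and b = b and x = x,
      OF k(1) smooth2_deriv_funpow_differentiable_fst[OF U, where y = y]
      smooth2_differentiable_fst[OF V, where y = y]]
  note constraint = kdv_similarity_constraint[where c = "k t" and x = x and b = b,
      OF smooth2_differentiable_fst[OF U, where y = y]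
      smooth2_differentiable_snd[OF V, where x = "k t * x" and y = y]]
  have factor: "- (k t ^ 4 / 3) * A + k t ^ 4 * (B + C) = k t ^ 4 * (- (1/3) * A + B + C)"
    for A B C :: real
    by (simp add: algebra_simps)
  show ?thesis
    unfolding eq_iff_diff_eq_0[of "deriv (\<lambda>z. k t * U (k t * z) y) x"] residual constraint coeff factor
    using k(2) r by simp
qed

lemma all_dilated_iff:
  fixes k :: "'a \<Rightarrow> 'b :: field"
  assumes "T \<noteq> {}" and "\<And>t. t \<in> T \<Longrightarrow> k t \<noteq> 0"
    and "\<And>x y t. t \<in> T \<Longrightarrow> P x y t \<longleftrightarrow> Q (k t * x) y"
  shows "(\<forall>x y. \<forall>t\<in>T. P x y t) \<longleftrightarrow> (\<forall>r y. Q r y)"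
proof (intro iffI allI)
  fix r y
  assume "\<forall>x y. \<forall>t\<in>T. P x y t"
  moreover obtain t where "t \<in> T" using assms(1) by blast
  ultimately have "Q (k t * (r / k t)) y"
    using assms(3) by blast
  then show "Q r y"
    using assms(2)[OF \<open>t \<in> T\<close>] by simp
qed (use assms(3) in blast)

theorem mainTheorem4:
  fixes \<rho> :: "real \<Rightarrow> real" and I :: "real set" and \<mu> \<sigma> :: real
    and U V :: "real \<Rightarrow> real \<Rightarrow> real"
    and u v :: "real \<Rightarrow> real \<Rightarrow> real \<Rightarrow> real"
  assumes I_open: "open I" and I_interval: "is_interval I" and I_ne: "I \<noteq> {}"
    and I_sign: "I \<subseteq> {0<..} \<or> I \<subseteq> {..<0}"
    and \<rho>_smooth: "smooth1_on I \<rho>"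
    and \<rho>_nz: "\<forall>t\<in>I. \<rho> t \<noteq> 0"
    and \<mu>_nz: "\<mu> \<noteq> 0" and \<sigma>_nz: "\<sigma> \<noteq> 0"
    and U_smooth: "smooth2 U" and V_smooth: "smooth2 V"
    and u_def: "u = (\<lambda>x y t. root 3 (\<rho> t / t) * U (root 3 (\<rho> t / t) * x) y)"
    and v_def: "v = (\<lambda>x y t. (root 3 (\<rho> t / t))^2 * V (root 3 (\<rho> t / t) * x) y
                          - deriv \<rho> t / (9 * \<mu>) * x)"
  shows "(\<forall>x y. \<forall>t\<in>I.
            \<rho> t * deriv (\<lambda>s. u x y s) t
              + 3 * \<mu> * deriv (\<lambda>z. u z y t * v z y t) x
              + \<sigma> * deriv (deriv (deriv (\<lambda>z. u z y t))) x = 0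
            \<and> deriv (\<lambda>z. u z y t) x = deriv (\<lambda>w. v x w t) y)
       \<longleftrightarrow>
         (\<forall>r y.
            - (1/3) * (U r y + r * deriv (\<lambda>z. U z y) r)
              + 3 * \<mu> * deriv (\<lambda>z. U z y * V z y) r
              + \<sigma> * deriv (deriv (deriv (\<lambda>z. U z y))) r = 0
            \<and> deriv (\<lambda>z. U z y) r - deriv (\<lambda>w. V r w) y = 0)"
proof -
  define k where "k s = root 3 (\<rho> s / s)" for s
  have t_nz: "t \<noteq> 0" if "t \<in> I" for t
    using I_sign that by auto
  have k_nz: "k t \<noteq> 0" if "t \<in> I" for t
    using t_nz[OF that] \<rho>_nz that by (simp add: k_def)
  show ?thesis
    unfolding u_def v_def k_def[symmetric]
  proof (rule all_dilated_iff[where k = k], goal_cases)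
    case (3 x y t)
    then have t: "t \<in> I" .
    define k' where "k' = k t * (deriv \<rho> t - \<rho> t / t) / (3 * \<rho> t)"
    have k': "(k has_real_derivative k') (at t)"
      unfolding k_def k'_def using \<rho>_nz t
      by (intro has_real_derivative_cbrt_quotient smooth1_on_has_derivative[OF \<rho>_smooth t] t_nz[OF t]) auto
    have "k t ^ 3 = \<rho> t / t"
      by (simp add: k_def odd_real_root_pow)
    then have coeff: "\<rho> t * k' - 3 * \<mu> * (deriv \<rho> t / (9 * \<mu>)) * k t = - (k t ^ 4 / 3)"
      using \<mu>_nz \<rho>_nz t_nz[OF t] t unfolding k'_def by (simp add: field_simps eval_nat_numeral)
    show ?case
      by (rule kdv_similarity_reduction_iff[OF U_smooth V_smooth k' k_nz[OF t] coeff refl])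
  qed (use I_ne k_nz in auto)
qed

end
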